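(* Let $((A,\cdot),N)$ be a Nijenhuis algebra with multiplication $\mu$. Then there is a bijection between the set of equivalence classes of infinitesimal deformations of $((A,\cdot),N)$ and the second cohomology group $H^2_{\mathrm{NAlg}}((A,N))$.
   Context: Over a field $\mathbf{k}$ of characteristic $0$. A Nijenhuis algebra is an associative algebra $(A,\cdot)$ with linear $N$ satisfying $N(a)N(b)=N(N(a)b+aN(b)-N(ab))$. An infinitesimal deformation is a pair $\mu_t=\mu+t\mu_1$ ($\mu_1\in\mathrm{Hom}(A^{\otimes2},A)$), $N_t=N+tN_1$ ($N_1\in\mathrm{Hom}(A,A)$) such that $((A[t]/(t^2),\mu_t),N_t)$ is a Nijenhuis algebra over $\mathbf{k}[t]/(t^2)$. Two infinitesimal deformations $(\mu+t\mu_1,N+tN_1)$, $(\mu+t\mu'_1,N+tN'_1)$ are equivalent if there is a $\mathbf{k}[t]/(t^2)$-linear map $\varphi_t=\mathrm{Id}_A+t\varphi_1$ which is an isomorphism of Nijenhuis algebras between them (respects multiplications and intertwines $N_t$, $N'_t$). Cochain complex: $C^0_{\mathrm{NAlg}}((A,N))=0$, $C^1=\mathrm{Hom}(A,A)$, $C^n=\mathrm{Hom}(A^{\otimes n},A)\oplus\mathrm{Hom}(A^{\otimes n-1},A)$ for $n\ge2$; $\delta_{\mathrm{NAlg}}(f)=(\delta_{\mathrm{Hoch}}f,-\partial^Nf)$ for $f\in C^1$, $\delta_{\mathrm{NAlg}}(\chi,F)=(\delta_{\mathrm{Hoch}}\chi,\ d_NF+(-1)^n\partial^N\chi)$ for $(\chi,F)\in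 C^n$, $n\ge2$, where $(\delta_{\mathrm{Hoch}}f)(a_1,\dots,a_{n+1})=a_1f(a_2,\dots,a_{n+1})+\sum_{i=1}^n(-1)^if(\dots,a_ia_{i+1},\dots)+(-1)^{n+1}f(a_1,\dots,a_n)a_{n+1}$; $(d_NF)(a_1,\dots,a_{n+1})=N(a_1)F(a_2,\dots,a_{n+1})-(-1)^nF(a_1,\dots,a_n)N(a_{n+1})+\sum_{i=1}^n(-1)^iF(a_1,\dots,a_{i-1},N(a_i)a_{i+1}+a_iN(a_{i+1})-N(a_ia_{i+1}),\dots,a_{n+1})-N((\delta_{\mathrm{Hoch}}F)(a_1,\dots,a_{n+1}))$; $\partial^N(f)(a_1,\dots,a_n)=\sum_{S\subseteq\{1..n\}}(-1)^{|S|}N^{|S|}(f(b_1,\dots,b_n))$, $b_i=a_i$ for $i\in S$, $b_i=N(a_i)$ otherwise. $H^2_{\mathrm{NAlg}}((A,N))$ = 2-cocycles modulo 2-coboundaries. *)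

theory Defs
  imports Complex_Main "HOL-Library.Product_Plus" "HOL-Library.Function_Algebras"
begin

text \<open>A is the type 'a, a k-vector space via the scalar multiplication sc :: 'k => 'a => 'a.
  Hom(A,A) = k-linear maps, Hom(A (x) A, A) = k-bilinear maps.\<close>

definition lin :: "('k::field \<Rightarrow> 'a::ab_group_add \<Rightarrow> 'a) \<Rightarrow> ('a \<Rightarrow> 'a) \<Rightarrow> bool" where
  "lin sc f \<longleftrightarrow> Vector_Spaces.linear sc sc f"

definition bilin :: "('k::field \<Rightarrow> 'a::ab_group_add \<Rightarrow> 'a) \<Rightarrow> ('a \<Rightarrow> 'a \<Rightarrow> 'a) \<Rightarrow> bool" where
  "bilin sc f \<longleftrightarrow> (\<forall>x. lin sc (f x)) \<and> (\<forall>y. lin sc (\<lambda>x. f x y))"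

definition assoc_mult :: "('a \<Rightarrow> 'a \<Rightarrow> 'a) \<Rightarrow> bool" where
  "assoc_mult m \<longleftrightarrow> (\<forall>a b c. m (m a b) c = m a (m b c))"

definition nijenhuis_id :: "('a \<Rightarrow> 'a \<Rightarrow> 'a::ab_group_add) \<Rightarrow> ('a \<Rightarrow> 'a) \<Rightarrow> bool" where
  "nijenhuis_id m N \<longleftrightarrow>
     (\<forall>a b. m (N a) (N b) = N (m (N a) b + m a (N b) - N (m a b)))"

definition nijenhuis_algebra ::
  "('k::field \<Rightarrow> 'a::ab_group_add \<Rightarrow> 'a) \<Rightarrow> ('a \<Rightarrow> 'a \<Rightarrow> 'a) \<Rightarrow> ('a \<Rightarrow> 'a) \<Rightarrow> bool" where
  "nijenhuis_algebra sc m N \<longleftrightarrow>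
     vector_space sc \<and> bilin sc m \<and> assoc_mult m \<and> lin sc N \<and> nijenhuis_id m N"

text \<open>An element a0 + t a1 of A[t]/(t^2) is the pair (a0, a1).\<close>

definition mult_t :: "('a \<Rightarrow> 'a \<Rightarrow> 'a::ab_group_add) \<Rightarrow> ('a \<Rightarrow> 'a \<Rightarrow> 'a)
    \<Rightarrow> 'a \<times> 'a \<Rightarrow> 'a \<times> 'a \<Rightarrow> 'a \<times> 'a" where
  "mult_t m m1 x y = (m (fst x) (fst y),
      m (fst x) (snd y) + m (snd x) (fst y) + m1 (fst x) (fst y))"

definition op_t :: "('a \<Rightarrow> 'a::ab_group_add) \<Rightarrow> ('a \<Rightarrow> 'a) \<Rightarrow> 'a \<times> 'a \<Rightarrow> 'a \<times> 'a" where
  "op_t N N1 x = (N (fst x), N (snd x) + N1 (fst x))"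

text \<open>Infinitesimal deformation (mu + t mu1, N + t N1), recorded as the pair (mu1, N1).\<close>

definition inf_deformation ::
  "('k::field \<Rightarrow> 'a::ab_group_add \<Rightarrow> 'a) \<Rightarrow> ('a \<Rightarrow> 'a \<Rightarrow> 'a) \<Rightarrow> ('a \<Rightarrow> 'a)
     \<Rightarrow> (('a \<Rightarrow> 'a \<Rightarrow> 'a) \<times> ('a \<Rightarrow> 'a)) set" where
  "inf_deformation sc m N = {(m1, N1). bilin sc m1 \<and> lin sc N1 \<and>
      assoc_mult (mult_t m m1) \<and> nijenhuis_id (mult_t m m1) (op_t N N1)}"

text \<open>Equivalence via phi_t = Id + t phi1 : (A[t], mu'_t, N'_t) -> (A[t], mu_t, N_t).\<close>

definition deform_equiv ::
  "('k::field \<Rightarrow> 'a::ab_group_add \<Rightarrow> 'a) \<Rightarrow> ('a \<Rightarrow> 'a \<Rightarrow> 'a) \<Rightarrow> ('a \<Rightarrow> 'a)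
     \<Rightarrow> ((('a \<Rightarrow> 'a \<Rightarrow> 'a) \<times> ('a \<Rightarrow> 'a)) \<times> (('a \<Rightarrow> 'a \<Rightarrow> 'a) \<times> ('a \<Rightarrow> 'a))) set" where
  "deform_equiv sc m N = {((m1, N1), (m1', N1')).
      (m1, N1) \<in> inf_deformation sc m N \<and> (m1', N1') \<in> inf_deformation sc m N \<and>
      (\<exists>phi1. lin sc phi1 \<and>
         (let phit = op_t id phi1 in
            bij phit \<and>
            (\<forall>x y. phit (mult_t m m1' x y) = mult_t m m1 (phit x) (phit y)) \<and>
            (\<forall>x. phit (op_t N N1' x) = op_t N N1 (phit x))))}"

definition hoch1 :: "('a \<Rightarrow> 'a \<Rightarrow> 'a::ab_group_add) \<Rightarrow> ('a \<Rightarrow> 'a) \<Rightarrow> 'a \<Rightarrow> 'a \<Rightarrow> 'a" where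
  "hoch1 m f a1 a2 = m a1 (f a2) - f (m a1 a2) + m (f a1) a2"

definition hoch2 :: "('a \<Rightarrow> 'a \<Rightarrow> 'a::ab_group_add) \<Rightarrow> ('a \<Rightarrow> 'a \<Rightarrow> 'a) \<Rightarrow> 'a \<Rightarrow> 'a \<Rightarrow> 'a \<Rightarrow> 'a" where
  "hoch2 m f a1 a2 a3 = m a1 (f a2 a3) - f (m a1 a2) a3 + f a1 (m a2 a3) - m (f a1 a2) a3"

text \<open>partial^N on 1- and 2-cochains (sum over subsets S, b_i = a_i for i in S, N a_i otherwise).\<close>

definition partialN1 :: "('a \<Rightarrow> 'a::ab_group_add) \<Rightarrow> ('a \<Rightarrow> 'a) \<Rightarrow> 'a \<Rightarrow> 'a" where
  "partialN1 N f a1 = f (N a1) - N (f a1)"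

definition partialN2 :: "('a \<Rightarrow> 'a::ab_group_add) \<Rightarrow> ('a \<Rightarrow> 'a \<Rightarrow> 'a) \<Rightarrow> 'a \<Rightarrow> 'a \<Rightarrow> 'a" where
  "partialN2 N f a1 a2 = f (N a1) (N a2) - N (f a1 (N a2)) - N (f (N a1) a2)
      + N (N (f a1 a2))"

definition dN1 :: "('a \<Rightarrow> 'a \<Rightarrow> 'a::ab_group_add) \<Rightarrow> ('a \<Rightarrow> 'a) \<Rightarrow> ('a \<Rightarrow> 'a) \<Rightarrow> 'a \<Rightarrow> 'a \<Rightarrow> 'a" where
  "dN1 m N F a1 a2 = m (N a1) (F a2) + m (F a1) (N a2)
      - F (m (N a1) a2 + m a1 (N a2) - N (m a1 a2)) - N (hoch1 m F a1 a2)"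

definition delta1 :: "('a \<Rightarrow> 'a \<Rightarrow> 'a::ab_group_add) \<Rightarrow> ('a \<Rightarrow> 'a) \<Rightarrow> ('a \<Rightarrow> 'a)
    \<Rightarrow> ('a \<Rightarrow> 'a \<Rightarrow> 'a) \<times> ('a \<Rightarrow> 'a)" where
  "delta1 m N f = (hoch1 m f, - partialN1 N f)"

text \<open>delta_NAlg : C^2 -> C^3 (n = 2, sign (-1)^2 = 1).\<close>

definition delta2 :: "('a \<Rightarrow> 'a \<Rightarrow> 'a::ab_group_add) \<Rightarrow> ('a \<Rightarrow> 'a)
    \<Rightarrow> ('a \<Rightarrow> 'a \<Rightarrow> 'a) \<times> ('a \<Rightarrow> 'a) \<Rightarrow> ('a \<Rightarrow> 'a \<Rightarrow> 'a \<Rightarrow> 'a) \<times> ('a \<Rightarrow> 'a \<Rightarrow> 'a)" where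
  "delta2 m N c = (hoch2 m (fst c), dN1 m N (snd c) + partialN2 N (fst c))"

definition cochains2 :: "('k::field \<Rightarrow> 'a::ab_group_add \<Rightarrow> 'a)
    \<Rightarrow> (('a \<Rightarrow> 'a \<Rightarrow> 'a) \<times> ('a \<Rightarrow> 'a)) set" where
  "cochains2 sc = {(chi, F). bilin sc chi \<and> lin sc F}"

definition cocycles2 :: "('k::field \<Rightarrow> 'a::ab_group_add \<Rightarrow> 'a) \<Rightarrow> ('a \<Rightarrow> 'a \<Rightarrow> 'a) \<Rightarrow> ('a \<Rightarrow> 'a)
    \<Rightarrow> (('a \<Rightarrow> 'a \<Rightarrow> 'a) \<times> ('a \<Rightarrow> 'a)) set" where
  "cocycles2 sc m N = {c \<in> cochains2 sc. delta2 m N c = 0}"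

definition coboundaries2 :: "('k::field \<Rightarrow> 'a::ab_group_add \<Rightarrow> 'a) \<Rightarrow> ('a \<Rightarrow> 'a \<Rightarrow> 'a) \<Rightarrow> ('a \<Rightarrow> 'a)
    \<Rightarrow> (('a \<Rightarrow> 'a \<Rightarrow> 'a) \<times> ('a \<Rightarrow> 'a)) set" where
  "coboundaries2 sc m N = {delta1 m N f | f. lin sc f}"

definition coh_rel2 :: "('k::field \<Rightarrow> 'a::ab_group_add \<Rightarrow> 'a) \<Rightarrow> ('a \<Rightarrow> 'a \<Rightarrow> 'a) \<Rightarrow> ('a \<Rightarrow> 'a)
    \<Rightarrow> ((('a \<Rightarrow> 'a \<Rightarrow> 'a) \<times> ('a \<Rightarrow> 'a)) \<times> (('a \<Rightarrow> 'a \<Rightarrow> 'a) \<times> ('a \<Rightarrow> 'a))) set" where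
  "coh_rel2 sc m N = {(c, c'). c \<in> cocycles2 sc m N \<and> c' \<in> cocycles2 sc m N \<and>
      (fst c - fst c', snd c - snd c') \<in> coboundaries2 sc m N}"

definition H2_NAlg :: "('k::field \<Rightarrow> 'a::ab_group_add \<Rightarrow> 'a) \<Rightarrow> ('a \<Rightarrow> 'a \<Rightarrow> 'a) \<Rightarrow> ('a \<Rightarrow> 'a)
    \<Rightarrow> (('a \<Rightarrow> 'a \<Rightarrow> 'a) \<times> ('a \<Rightarrow> 'a)) set set" where
  "H2_NAlg sc m N = cocycles2 sc m N // coh_rel2 sc m N"

end

theory Submission
  imports Defs
begin

(* Write out the Nijenhuis algebra axioms for (mu + t mu1, N + t N1) on A[t]/(t^2). The
   t^0-components are the axioms of (A, N); the t^1-components of associativity and of the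
   Nijenhuis identity are exactly the two components of the cocycle condition for (mu1, N1).
   Likewise Id + t phi1 is always invertible, with inverse Id - t phi1, and it is a morphism
   between two deformations iff their difference is the coboundary of - phi1. Hence
   infinitesimal deformations are the 2-cocycles, equivalence of deformations is
   cohomology of cocycles, and the bijection is the identity on classes. Characteristic 0
   is not used. *)

locale biadditive =
  fixes m :: "'a::ab_group_add \<Rightarrow> 'b::ab_group_add \<Rightarrow> 'c::ab_group_add"
  assumes add_left: "m (x + x') y = m x y + m x' y"
    and add_right: "m x (y + y') = m x y + m x y'"
begin

lemma additive_left: "additive (\<lambda>x. m x y)"
  by unfold_locales (rule add_left)

lemma additive_right: "additive (m x)"
  by unfold_locales (rule add_right)

lemma zero_left: "m 0 y = 0"
  using additive.zero[OF additive_left] .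

lemma zero_right: "m x 0 = 0"
  using additive.zero[OF additive_right] .

lemma minus_left: "m (- x) y = - m x y"
  using additive.minus[OF additive_left] .

lemma minus_right: "m x (- y) = - m x y"
  using additive.minus[OF additive_right] .

lemma diff_left: "m (x - x') y = m x y - m x' y"
  using additive.diff[OF additive_left] .

lemma diff_right: "m x (y - y') = m x y - m x y'"
  using additive.diff[OF additive_right] .

lemmas simps = add_left add_right zero_left zero_right minus_left minus_right diff_left diff_right

end

lemma lin_imp_additive: "lin sc f \<Longrightarrow> additive f"
  by (simp add: lin_def Vector_Spaces.linear_iff additive_def)

lemma bilin_imp_biadditive: "bilin sc m \<Longrightarrow> biadditive m"
  unfolding bilin_def by unfold_locales (simp_all add: lin_def Vector_Spaces.linear_iff)

lemma lin_uminus: "lin sc f \<Longrightarrow> lin sc (- f)"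
  unfolding lin_def fun_Compl_def
  by (auto simp: Vector_Spaces.linear_iff module.scale_minus_right module_iff_vector_space[symmetric])

context
  fixes m :: "'a::ab_group_add \<Rightarrow> 'a \<Rightarrow> 'a"
  assumes "biadditive m"
begin

interpretation biadditive m by fact

lemma assoc_mult_mult_t_iff:
  assumes assoc: "assoc_mult m"
  shows "assoc_mult (mult_t m m1) \<longleftrightarrow> hoch2 m m1 = 0"
proof
  assume "assoc_mult (mult_t m m1)"
  then have "mult_t m m1 (mult_t m m1 (a, 0) (b, 0)) (c, 0)
      = mult_t m m1 (a, 0) (mult_t m m1 (b, 0) (c, 0))" for a b c
    by (simp add: assoc_mult_def)
  then show "hoch2 m m1 = 0"
    by (simp add: fun_eq_iff mult_t_def hoch2_def simps algebra_simps)
next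
  assume "hoch2 m m1 = 0"
  then have "m a (m1 b c) + m1 a (m b c) = m1 (m a b) c + m (m1 a b) c" for a b c
    by (simp add: fun_eq_iff hoch2_def algebra_simps)
  with assoc show "assoc_mult (mult_t m m1)"
    by (simp add: assoc_mult_def mult_t_def simps algebra_simps)
qed

lemma nijenhuis_id_mult_t_op_t_iff:
  assumes "additive N" and nij: "nijenhuis_id m N"
  shows "nijenhuis_id (mult_t m m1) (op_t N N1) \<longleftrightarrow> dN1 m N N1 + partialN2 N m1 = 0"
proof -
  interpret N: additive N by fact
  note expand = mult_t_def op_t_def dN1_def partialN2_def hoch1_def simps N.add N.zero N.diff
  have nij_base: "m (N a) (N b) = N (m (N a) b + m a (N b) - N (m a b))" for a b
    using nij by (simp add: nijenhuis_id_def)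
  show ?thesis
  proof
    assume "nijenhuis_id (mult_t m m1) (op_t N N1)"
    then have "mult_t m m1 (op_t N N1 (a, 0)) (op_t N N1 (b, 0)) =
        op_t N N1 (mult_t m m1 (op_t N N1 (a, 0)) (b, 0) + mult_t m m1 (a, 0) (op_t N N1 (b, 0))
          - op_t N N1 (mult_t m m1 (a, 0) (b, 0)))" for a b
      by (simp add: nijenhuis_id_def)
    then show "dN1 m N N1 + partialN2 N m1 = 0"
      by (simp add: fun_eq_iff expand algebra_simps)
  next
    assume "dN1 m N N1 + partialN2 N m1 = 0"
    then have cocycle: "dN1 m N N1 a b + partialN2 N m1 a b = 0" for a b
      by (simp add: fun_eq_iff)
    show "nijenhuis_id (mult_t m m1) (op_t N N1)"
      unfolding nijenhuis_id_def
    proof (intro allI)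
      fix x y :: "'a \<times> 'a"
      show "mult_t m m1 (op_t N N1 x) (op_t N N1 y) = op_t N N1 (mult_t m m1 (op_t N N1 x) y
          + mult_t m m1 x (op_t N N1 y) - op_t N N1 (mult_t m m1 x y))"
        using cocycle[of "fst x" "fst y"] by (simp add: nij_base expand algebra_simps)
    qed
  qed
qed

lemma op_t_id_mult_t_hom_iff:
  "(\<forall>x y. op_t id phi (mult_t m m1' x y) = mult_t m m1 (op_t id phi x) (op_t id phi y))
     \<longleftrightarrow> m1 - m1' = hoch1 m (- phi)"
proof
  assume "\<forall>x y. op_t id phi (mult_t m m1' x y) = mult_t m m1 (op_t id phi x) (op_t id phi y)"
  then have "op_t id phi (mult_t m m1' (a, 0) (b, 0))
      = mult_t m m1 (op_t id phi (a, 0)) (op_t id phi (b, 0))" for a b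
    by blast
  then show "m1 - m1' = hoch1 m (- phi)"
    by (simp add: fun_eq_iff op_t_def mult_t_def hoch1_def simps algebra_simps)
next
  assume "m1 - m1' = hoch1 m (- phi)"
  then have "m1 a b = m1' a b - m a (phi b) + phi (m a b) - m (phi a) b" for a b
    by (simp add: fun_eq_iff hoch1_def simps algebra_simps)
  then show "\<forall>x y. op_t id phi (mult_t m m1' x y) = mult_t m m1 (op_t id phi x) (op_t id phi y)"
    by (simp add: op_t_def mult_t_def simps algebra_simps)
qed

end

lemma op_t_id_intertwines_op_t_iff:
  assumes "additive N"
  shows "(\<forall>x. op_t id phi (op_t N N1' x) = op_t N N1 (op_t id phi x))
     \<longleftrightarrow> N1 - N1' = - partialN1 N (- phi)"
proof -
  interpret additive N by fact
  have "(\<forall>x. op_t id phi (op_t N N1' x) = op_t N N1 (op_t id phi x))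
      \<longleftrightarrow> (\<forall>a. N1 a = N1' a + phi (N a) - N (phi a))"
    by (auto simp: op_t_def add zero algebra_simps)
  also have "\<dots> \<longleftrightarrow> N1 - N1' = - partialN1 N (- phi)"
    by (auto simp: fun_eq_iff partialN1_def minus algebra_simps)
  finally show ?thesis .
qed

lemma bij_op_t_id: "bij (op_t id phi)"
  by (rule bij_betw_byWitness[where f' = "op_t id (- phi)"]) (auto simp: op_t_def)

lemma nijenhuis_algebraD:
  assumes "nijenhuis_algebra sc m N"
  shows "biadditive m" "additive N" "assoc_mult m" "nijenhuis_id m N"
  using assms bilin_imp_biadditive lin_imp_additive by (auto simp: nijenhuis_algebra_def)

lemma inf_deformation_eq_cocycles2:
  assumes "nijenhuis_algebra sc m N"
  shows "inf_deformation sc m N = cocycles2 sc m N"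
  using assoc_mult_mult_t_iff[OF nijenhuis_algebraD(1,3)[OF assms]]
    nijenhuis_id_mult_t_op_t_iff[OF nijenhuis_algebraD(1,2,4)[OF assms]]
  by (auto simp: inf_deformation_def cocycles2_def cochains2_def delta2_def zero_prod_def)

lemma deform_equiv_eq_coh_rel2:
  assumes "nijenhuis_algebra sc m N"
  shows "deform_equiv sc m N = coh_rel2 sc m N"
proof -
  note hom_iff = op_t_id_mult_t_hom_iff[OF nijenhuis_algebraD(1)[OF assms]]
  note intertwines_iff = op_t_id_intertwines_op_t_iff[OF nijenhuis_algebraD(2)[OF assms]]
  have lin_reparam: "(\<exists>phi. lin sc phi \<and> P (- phi)) \<longleftrightarrow> (\<exists>f. lin sc f \<and> P f)" for P
    by (metis lin_uminus minus_minus)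
  have "((m1, N1), (m1', N1')) \<in> deform_equiv sc m N \<longleftrightarrow> ((m1, N1), (m1', N1')) \<in> coh_rel2 sc m N"
    for m1 N1 m1' N1'
  proof -
    have "((m1, N1), (m1', N1')) \<in> deform_equiv sc m N \<longleftrightarrow>
        (m1, N1) \<in> cocycles2 sc m N \<and> (m1', N1') \<in> cocycles2 sc m N \<and>
        (\<exists>phi. lin sc phi \<and> m1 - m1' = hoch1 m (- phi) \<and> N1 - N1' = - partialN1 N (- phi))"
      unfolding deform_equiv_def inf_deformation_eq_cocycles2[OF assms]
      by (simp only: mem_Collect_eq case_prod_conv Let_def hom_iff intertwines_iff bij_op_t_id
          simp_thms)
    also have "\<dots> \<longleftrightarrow> (m1, N1) \<in> cocycles2 sc m N \<and> (m1', N1') \<in> cocycles2 sc m N \<and>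
        (\<exists>f. lin sc f \<and> m1 - m1' = hoch1 m f \<and> N1 - N1' = - partialN1 N f)"
      using lin_reparam[where P = "\<lambda>f. m1 - m1' = hoch1 m f \<and> N1 - N1' = - partialN1 N f"] by simp
    also have "\<dots> \<longleftrightarrow> ((m1, N1), (m1', N1')) \<in> coh_rel2 sc m N"
      by (auto simp: coh_rel2_def coboundaries2_def delta1_def)
    finally show ?thesis .
  qed
  then show ?thesis
    by (intro set_eqI) (metis prod.collapse)
qed

theorem theorem4p2:
  fixes sc :: "'k::field_char_0 \<Rightarrow> 'a::ab_group_add \<Rightarrow> 'a"
    and m :: "'a \<Rightarrow> 'a \<Rightarrow> 'a"
    and N :: "'a \<Rightarrow> 'a"
  assumes "nijenhuis_algebra sc m N"
  shows "\<exists>\<Phi>. bij_betw \<Phi> (inf_deformation sc m N // deform_equiv sc m N) (H2_NAlg sc m N)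
            \<and> (\<forall>d \<in> inf_deformation sc m N.
                 \<Phi> (deform_equiv sc m N `` {d}) = coh_rel2 sc m N `` {d})"
proof (intro exI[of _ id] conjI ballI)
  show "bij_betw id (inf_deformation sc m N // deform_equiv sc m N) (H2_NAlg sc m N)"
    unfolding H2_NAlg_def inf_deformation_eq_cocycles2[OF assms] deform_equiv_eq_coh_rel2[OF assms]
    by (rule bij_betw_id)
qed (simp add: deform_equiv_eq_coh_rel2[OF assms])

end
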